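(* Let $n$ be a positive integer, let $\mathfrak A=(A_1,\dots,A_k)$ be an ordered partition of $[n]$ into nonempty blocks with length-vector $(\ell_1,\dots,\ell_{k-1})=(|A_1|,\dots,|A_{k-1}|)$, and let $\mathbf a\colon[n]\to[n]$ be such that $\operatorname{coim}(\mathbf a)=\mathfrak A$. Then $\mathbf a$ is a parking function if and only if $\operatorname{rim}(\mathbf a)\in\langle\ell_1,\dots,\ell_{k-1}\rangle$; and $\mathbf a$ is a parking function with $\operatorname{run}(\mathbf a)=r$ if and only if $\operatorname{rim}(\mathbf a)=(0,1,\dots,r-1,x_{r+1},\dots,x_k)$ for some integers $x_{r+1},\dots,x_k$ with $$(0,x_{r+1}-r,\dots,x_k-r)\in\Big\langle \Big(\sum_{i=1}^r\ell_i\Big)-r,\ \ell_{r+1},\dots,\ell_{k-1}\Big\rangle.$$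
   Context: Let $[n]=\{1,\dots,n\}$. A parking function of length $n$ is $\mathbf a=(a_1,\dots,a_n)\in[n]^n$ with $|\{j:a_j\le i\}|\ge i$ for every $i\in[n]$. If $1\in\{a_1,\dots,a_n\}$, $\operatorname{run}(\mathbf a)=\max\{i\in[n]:[i]\subseteq\{a_1,\dots,a_n\}\}$; otherwise $\operatorname{run}(\mathbf a)=0$. If $\{a_1,\dots,a_n\}=\{x_1<\dots<x_k\}$, the reduced image is $\operatorname{rim}(\mathbf a)=(x_1-1,\dots,x_k-1)$, and the coimage $\operatorname{coim}(\mathbf a)$ is the set of fibers $\mathbf a^{-1}(\{x_j\})$, ordered by increasing value $x_j$, viewed as an ordered partition of $[n]$. For integers $\ell_1,\dots,\ell_m$ with partial sums $L_i=\ell_1+\dots+\ell_i$, $\langle\ell_1,\dots,\ell_m\rangle=\{(x_0,\dots,x_m)\in\mathbb Z^{m+1}: x_0=0,\ x_{i-1}<x_i\le L_i\ \forall\, 1\le i\le m\}$. *)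

theory Defs
  imports Main
begin

text \<open>Functions [n] -> [n] are modelled as a :: nat => nat; only values on {1..n} matter.\<close>

definition parking_function :: "nat \<Rightarrow> (nat \<Rightarrow> nat) \<Rightarrow> bool" where
  "parking_function n a \<longleftrightarrow>
     (\<forall>j\<in>{1..n}. a j \<in> {1..n}) \<and>
     (\<forall>i\<in>{1..n}. card {j\<in>{1..n}. a j \<le> i} \<ge> i)"

definition run :: "nat \<Rightarrow> (nat \<Rightarrow> nat) \<Rightarrow> nat" where
  "run n a = (if 1 \<in> a ` {1..n} then Max {i\<in>{1..n}. {1..i} \<subseteq> a ` {1..n}} else 0)"

definition rim :: "nat \<Rightarrow> (nat \<Rightarrow> nat) \<Rightarrow> int list" where
  "rim n a = map (\<lambda>x. int x - 1) (sorted_list_of_set (a ` {1..n}))"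

definition coim :: "nat \<Rightarrow> (nat \<Rightarrow> nat) \<Rightarrow> nat set list" where
  "coim n a = map (\<lambda>x. {j\<in>{1..n}. a j = x}) (sorted_list_of_set (a ` {1..n}))"

definition ordered_partition :: "nat \<Rightarrow> nat set list \<Rightarrow> bool" where
  "ordered_partition n As \<longleftrightarrow>
     (\<forall>A\<in>set As. A \<noteq> {}) \<and>
     (\<forall>i<length As. \<forall>j<length As. i \<noteq> j \<longrightarrow> As ! i \<inter> As ! j = {}) \<and>
     \<Union>(set As) = {1..n}"

text \<open>box ls = <l_1,...,l_m>: tuples (x_0,...,x_m) (as a list, x_i = xs!i) with x_0 = 0 and
  x_{i-1} < x_i <= l_1+...+l_i for 1 <= i <= m.\<close>
definition box :: "int list \<Rightarrow> int list set" where
  "box ls = {xs. length xs = length ls + 1 \<and> xs ! 0 = 0 \<and>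
     (\<forall>i\<in>{1..length ls}. xs ! (i - 1) < xs ! i \<and> xs ! i \<le> sum_list (take i ls))}"

end

theory Submission
  imports Defs
begin

text \<open>Let x_1 < ... < x_k be the values of a, so that L_i = l_1 + ... + l_i counts the
  j with a j < x_(i+1). As no value lies strictly between consecutive x_i, the parking
  condition only has to be checked just below the values: a is a parking function iff
  x_1 = 1 and x_(i+1) - 1 <= L_i for all i, which is membership of rim a in the box, since
  rim a is automatically strictly increasing. The run is r iff rim a starts with 0, ..., r - 1
  and its next entry exceeds r. Subtracting r from the remaining entries turns the bounds for
  i >= r into the box of the shifted length vector, whose partial sums are L_i - r, and the
  run condition into strict increase at its first step; the bounds for i < r hold anyway
  because all blocks are nonempty, so L_i >= i.\<close>

lemma sorted_wrt_less_nth_less_iff: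
  fixes xs :: "'a::linorder list"
  assumes "sorted_wrt (<) xs" "i < length xs" "j < length xs"
  shows "xs ! i < xs ! j \<longleftrightarrow> i < j"
  using sorted_wrt_nth_less[OF assms(1)] assms(2,3) by (metis less_asym linorder_neqE_nat)

lemma sorted_wrt_less_set_take:
  fixes xs :: "'a::linorder list"
  assumes "sorted_wrt (<) xs" "i < length xs"
  shows "set (take i xs) = {x \<in> set xs. x < xs ! i}"
proof -
  have "x \<in> set (take i xs) \<longleftrightarrow> (\<exists>t<length xs. t < i \<and> x = xs ! t)" for x
    using assms(2) by (auto simp: in_set_conv_nth) (metis order.strict_trans)
  also have "\<dots> x \<longleftrightarrow> (\<exists>t<length xs. xs ! t < xs ! i \<and> x = xs ! t)" for x
    using sorted_wrt_less_nth_less_iff[OF assms(1) _ assms(2)] by blast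
  finally show ?thesis by (auto simp: in_set_conv_nth)
qed

lemma sorted_wrt_less_atLeastAtMost_subset_iff:
  fixes xs :: "nat list"
  assumes sorted: "sorted_wrt (<) xs" and pos: "\<forall>x\<in>set xs. 1 \<le> x"
  shows "{1..i} \<subseteq> set xs \<longleftrightarrow> take i xs = [1..<i+1]"
proof
  assume sub: "{1..i} \<subseteq> set xs"
  have idx: "t + 1 \<le> xs ! t" if "t < length xs" for t
    using sorted_wrt_less_idx[of "0 # xs" "t + 1"] sorted pos that by (simp add: Suc_le_eq)
  have sub_take: "{1..i} \<subseteq> set (take i xs)"
  proof
    fix x assume x: "x \<in> {1..i}"
    then have "x \<in> set xs" using sub by blast
    then obtain t where "t < length xs" "xs ! t = x" by (auto simp: in_set_conv_nth)
    with x idx show "x \<in> set (take i xs)" by (force simp: in_set_conv_nth)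
  qed
  have dist: "distinct (take i xs)" using sorted by (simp add: strict_sorted_iff)
  have "i \<le> card (set (take i xs))" using card_mono[OF _ sub_take] by simp
  also have "\<dots> = length (take i xs)" using dist by (rule distinct_card)
  finally have "i \<le> length xs" by simp
  then have "card (set (take i xs)) \<le> card {1..i}" using dist by (simp add: distinct_card)
  then have "{1..i} = set (take i xs)" using card_seteq[OF finite_set sub_take] by blast
  moreover have "sorted_list_of_set (set (take i xs)) = take i xs"
    using sorted dist by (intro sorted_list_of_set.idem_if_sorted_distinct) (simp_all add: strict_sorted_iff)
  ultimately show "take i xs = [1..<i+1]"
    by (metis atLeastLessThanSuc_atLeastAtMost Suc_eq_plus1 sorted_list_of_set_range)
next
  assume "take i xs = [1..<i+1]"
  then have "{1..i} = set (take i xs)" by auto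
  then show "{1..i} \<subseteq> set xs" by (metis set_take_subset)
qed

lemma ex_append_eq_iff:
  "(\<exists>ys. xs = zs @ ys \<and> P ys) \<longleftrightarrow> take (length zs) xs = zs \<and> P (drop (length zs) xs)"
  by (metis append_eq_conv_conj)

lemma take_eq_upt_nth:
  assumes "take r xs = map int [0..<r]"
  shows "r \<le> length xs" and "j < r \<Longrightarrow> xs ! j = int j"
proof -
  show "r \<le> length xs" using arg_cong[OF assms, of length] by simp
  show "xs ! j = int j" if "j < r"
    using arg_cong[OF assms, of "\<lambda>ys. ys ! j"] that by simp
qed

lemma take_Suc_eq_upt_iff:
  "take (Suc r) xs = map int [0..<Suc r] \<longleftrightarrow>
     take r xs = map int [0..<r] \<and> r < length xs \<and> xs ! r = int r"
  by (cases "r < length xs") (auto simp: take_Suc_conv_app_nth dest: arg_cong[of _ _ length])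

lemma take_eq_upt_mono:
  "take i xs = map int [0..<i] \<Longrightarrow> j \<le> i \<Longrightarrow> take j xs = map int [0..<j]"
  by (metis min.absorb1 take_map take_take take_upt add_0)

lemma ball_atLeastAtMost_1_iff: "(\<forall>i\<in>{1..m}. P i) \<longleftrightarrow> (\<forall>i<m. P (Suc i))"
  unfolding image_Suc_lessThan[symmetric] by auto

lemma box_iff:
  "xs \<in> box ls \<longleftrightarrow> length xs = length ls + 1 \<and> sorted_wrt (<) xs \<and> xs ! 0 = 0 \<and>
     (\<forall>j<length xs. xs ! j \<le> sum_list (take j ls))"
proof (cases "length xs = length ls + 1")
  case True
  have "sorted_wrt (<) xs \<longleftrightarrow> (\<forall>i\<in>{1..length ls}. xs ! (i - 1) < xs ! i)"
    using True unfolding ball_atLeastAtMost_1_iff by (simp add: sorted_wrt_iff_nth_Suc_transp)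
  moreover have "(\<forall>j<length xs. xs ! j \<le> sum_list (take j ls)) \<longleftrightarrow>
      xs ! 0 \<le> 0 \<and> (\<forall>i\<in>{1..length ls}. xs ! i \<le> sum_list (take i ls))"
    using True unfolding ball_atLeastAtMost_1_iff by (simp add: All_less_Suc2)
  ultimately show ?thesis unfolding box_def using True by auto
qed (simp add: box_def)

lemma sum_list_take_ge:
  fixes ls :: "int list"
  assumes "\<forall>l\<in>set ls. 1 \<le> l" "j \<le> length ls"
  shows "int j \<le> sum_list (take j ls)"
  using assms
proof (induction ls arbitrary: j)
  case (Cons l ls)
  then show ?case by (cases j) force+
qed simp

lemma shifted_box_iff:
  fixes xs ls :: "int list"
  assumes sorted: "sorted_wrt (<) xs" and len: "length xs = length ls + 1" and r: "r \<le> length xs"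
  shows "0 # map (\<lambda>x. x - int r) (drop r xs)
           \<in> box (take (length xs - r) ((sum_list (take r ls) - int r) # drop r ls)) \<longleftrightarrow>
         (r < length xs \<longrightarrow> int r < xs ! r) \<and>
         (\<forall>j. r \<le> j \<longrightarrow> j < length xs \<longrightarrow> xs ! j \<le> sum_list (take j ls))"
proof -
  define ys where "ys = 0 # map (\<lambda>x. x - int r) (drop r xs)"
  define ms where "ms = take (length xs - r) ((sum_list (take r ls) - int r) # drop r ls)"
  have len_ys: "length ys = length xs - r + 1" by (simp add: ys_def)
  have len_ms: "length ms = length xs - r" using len r by (simp add: ms_def)
  have ys_Suc: "ys ! Suc t = xs ! (r + t) - int r" if "t < length xs - r" for t
    using that by (simp add: ys_def)
  have ms_Suc: "sum_list (take (Suc t) ms) = sum_list (take (r + t) ls) - int r"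
    if "t < length xs - r" for t
    using that by (simp add: ms_def min_def take_add)
  have "sorted_wrt (<) ys \<longleftrightarrow> (\<forall>t<length xs - r. int r < xs ! (r + t))"
    using sorted by (simp add: ys_def sorted_wrt_map all_set_conv_all_nth)
  also have "\<dots> \<longleftrightarrow> (r < length xs \<longrightarrow> int r < xs ! r)"
  proof
    assume "\<forall>t<length xs - r. int r < xs ! (r + t)"
    then show "r < length xs \<longrightarrow> int r < xs ! r" by (metis add_0_right zero_less_diff)
  next
    assume at_r: "r < length xs \<longrightarrow> int r < xs ! r"
    show "\<forall>t<length xs - r. int r < xs ! (r + t)"
    proof (intro allI impI)
      fix t assume "t < length xs - r"
      then have "r < length xs" "r + t < length xs" by auto
      then have "xs ! r \<le> xs ! (r + t)"
        using sorted_wrt_nth_less[OF sorted, of r "r + t"] by (cases "t = 0") auto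
      with at_r \<open>r < length xs\<close> show "int r < xs ! (r + t)" by simp
    qed
  qed
  finally have sorted_ys: "sorted_wrt (<) ys \<longleftrightarrow> (r < length xs \<longrightarrow> int r < xs ! r)" .
  have "(\<forall>i<length ys. ys ! i \<le> sum_list (take i ms)) \<longleftrightarrow>
      (\<forall>t<length xs - r. xs ! (r + t) \<le> sum_list (take (r + t) ls))"
    unfolding len_ys Suc_eq_plus1[symmetric] All_less_Suc2 using ys_Suc ms_Suc by (simp add: ys_def)
  also have "\<dots> \<longleftrightarrow> (\<forall>j. r \<le> j \<longrightarrow> j < length xs \<longrightarrow> xs ! j \<le> sum_list (take j ls))"
  proof (intro iffI allI impI)
    fix j assume "\<forall>t<length xs - r. xs ! (r + t) \<le> sum_list (take (r + t) ls)" "r \<le> j" "j < length xs"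
    then show "xs ! j \<le> sum_list (take j ls)" by (metis diff_less_mono le_add_diff_inverse)
  qed auto
  finally have bounds: "(\<forall>i<length ys. ys ! i \<le> sum_list (take i ms)) \<longleftrightarrow>
      (\<forall>j. r \<le> j \<longrightarrow> j < length xs \<longrightarrow> xs ! j \<le> sum_list (take j ls))" .
  have "ys ! 0 = 0" by (simp add: ys_def)
  then show ?thesis
    unfolding ys_def[symmetric] ms_def[symmetric] box_iff using len_ys len_ms sorted_ys bounds
    by auto
qed

lemma box_prefix_iff:
  fixes xs ls :: "int list"
  assumes sorted: "sorted_wrt (<) xs" and len: "length xs = length ls + 1"
    and pos: "\<forall>l\<in>set ls. 1 \<le> l"
  shows "(\<exists>ys. xs = map int [0..<r] @ ys \<and>
            0 # map (\<lambda>x. x - int r) ys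
              \<in> box (take (length xs - r) ((sum_list (take r ls) - int r) # drop r ls))) \<longleftrightarrow>
         xs \<in> box ls \<and> take r xs = map int [0..<r] \<and> (r < length xs \<longrightarrow> int r < xs ! r)"
proof -
  let ?bounded = "\<lambda>j. xs ! j \<le> sum_list (take j ls)"
  have "(\<exists>ys. xs = map int [0..<r] @ ys \<and>
            0 # map (\<lambda>x. x - int r) ys
              \<in> box (take (length xs - r) ((sum_list (take r ls) - int r) # drop r ls))) \<longleftrightarrow>
      take r xs = map int [0..<r] \<and>
      (r < length xs \<longrightarrow> int r < xs ! r) \<and> (\<forall>j. r \<le> j \<longrightarrow> j < length xs \<longrightarrow> ?bounded j)"
    unfolding ex_append_eq_iff using shifted_box_iff[OF sorted len] take_eq_upt_nth(1) by auto
  also have "\<dots> \<longleftrightarrow> take r xs = map int [0..<r] \<and>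
      (r < length xs \<longrightarrow> int r < xs ! r) \<and> xs ! 0 = 0 \<and> (\<forall>j<length xs. ?bounded j)"
  proof (cases "r = 0")
    case True
    then show ?thesis using len by auto
  next
    case False
    have "?bounded j" if "take r xs = map int [0..<r]" "j < r" for j
      using take_eq_upt_nth[OF that(1)] sum_list_take_ge[OF pos, of j] that(2) len by simp
    moreover have "xs ! 0 = 0" if "take r xs = map int [0..<r]"
      using take_eq_upt_nth(2)[OF that, of 0] False by simp
    ultimately show ?thesis by (meson not_le)
  qed
  finally show ?thesis using sorted len by (auto simp: box_iff)
qed

lemma sorted_rim: "sorted_wrt (<) (rim n a)"
  unfolding rim_def sorted_wrt_map
  by (rule sorted_wrt_mono_rel[OF _ strict_sorted_list_of_set]) simp

lemma length_rim: "length (rim n a) = card (a ` {1..n})"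
  by (simp add: rim_def)

lemma length_coim: "length (coim n a) = card (a ` {1..n})"
  by (simp add: coim_def)

lemma rim_nth:
  "i < length (rim n a) \<Longrightarrow> rim n a ! i = int (sorted_list_of_set (a ` {1..n}) ! i) - 1"
  by (simp add: rim_def)

lemma atLeastAtMost_subset_image_iff_take_rim:
  assumes "\<forall>j\<in>{1..n}. a j \<in> {1..n}"
  shows "{1..i} \<subseteq> a ` {1..n} \<longleftrightarrow> take i (rim n a) = map int [0..<i]"
proof -
  define s where "s = sorted_list_of_set (a ` {1..n})"
  have "{1..i} \<subseteq> a ` {1..n} \<longleftrightarrow> take i s = [1..<i+1]"
    using sorted_wrt_less_atLeastAtMost_subset_iff[of s i] assms by (auto simp: s_def)
  also have "\<dots> \<longleftrightarrow> map (\<lambda>x. int x - 1) (take i s) = map (\<lambda>x. int x - 1) [1..<i+1]"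
    by (simp add: inj_map_eq_map inj_def)
  also have "map (\<lambda>x. int x - 1) [1..<i+1] = map int [0..<i]"
    by (induction i) auto
  finally show ?thesis by (simp add: rim_def s_def take_map)
qed

lemma sum_list_take_card_coim:
  assumes "i < length (coim n a)"
  shows "sum_list (take i (map (\<lambda>A. int (card A)) (coim n a))) =
           int (card {j\<in>{1..n}. a j < sorted_list_of_set (a ` {1..n}) ! i})"
proof -
  define s where "s = sorted_list_of_set (a ` {1..n})"
  define fibre where "fibre x = {j\<in>{1..n}. a j = x}" for x
  have sorted: "sorted_wrt (<) s" by (simp add: s_def)
  have i: "i < length s" using assms by (simp add: coim_def s_def)
  have "sum_list (take i (map (\<lambda>A. int (card A)) (coim n a))) =
      sum_list (map (\<lambda>x. int (card (fibre x))) (take i s))"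
    by (simp add: coim_def take_map s_def fibre_def comp_def)
  also have "\<dots> = (\<Sum>x\<in>set (take i s). int (card (fibre x)))"
    using sorted by (simp add: sum_list_distinct_conv_sum_set strict_sorted_iff)
  also have "set (take i s) = {x \<in> a ` {1..n}. x < s ! i}"
    using sorted_wrt_less_set_take[OF sorted i] by (simp add: s_def)
  also have "(\<Sum>x\<in>{x \<in> a ` {1..n}. x < s ! i}. int (card (fibre x))) =
      int (card (\<Union>x\<in>{x \<in> a ` {1..n}. x < s ! i}. fibre x))"
    by (subst card_UN_disjoint) (auto simp: fibre_def)
  also have "(\<Union>x\<in>{x \<in> a ` {1..n}. x < s ! i}. fibre x) = {j\<in>{1..n}. a j < s ! i}"
    by (auto simp: fibre_def)
  finally show ?thesis by (simp add: s_def)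
qed

lemma parking_function_iff_image:
  assumes "n > 0" and range: "\<forall>j\<in>{1..n}. a j \<in> {1..n}"
  shows "parking_function n a \<longleftrightarrow>
    1 \<in> a ` {1..n} \<and> (\<forall>x\<in>a ` {1..n}. x \<le> card {j\<in>{1..n}. a j < x} + 1)"
proof
  assume "parking_function n a"
  then have count: "\<forall>i\<in>{1..n}. i \<le> card {j\<in>{1..n}. a j \<le> i}"
    by (simp add: parking_function_def)
  have "1 \<le> card {j\<in>{1..n}. a j \<le> 1}" using count \<open>n > 0\<close> by simp
  then have "{j\<in>{1..n}. a j \<le> 1} \<noteq> {}" by (metis card.empty not_one_le_zero)
  then have "1 \<in> a ` {1..n}" using range by force
  moreover have "x \<le> card {j\<in>{1..n}. a j < x} + 1" if "x \<in> a ` {1..n}" for x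
  proof (cases "x = 1")
    case False
    with that range have "x - 1 \<in> {1..n}" "{j\<in>{1..n}. a j \<le> x - 1} = {j\<in>{1..n}. a j < x}"
      by auto
    then show ?thesis using count by fastforce
  qed simp
  ultimately show "1 \<in> a ` {1..n} \<and> (\<forall>x\<in>a ` {1..n}. x \<le> card {j\<in>{1..n}. a j < x} + 1)"
    by blast
next
  assume image_bound: "1 \<in> a ` {1..n} \<and> (\<forall>x\<in>a ` {1..n}. x \<le> card {j\<in>{1..n}. a j < x} + 1)"
  have "m \<le> card {j\<in>{1..n}. a j \<le> m}" if "m \<in> {1..n}" for m
  proof (cases "\<exists>x\<in>a ` {1..n}. m < x")
    case False
    then have "{j\<in>{1..n}. a j \<le> m} = {1..n}" by auto
    then show ?thesis using that by simp
  next
    case True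
    define x where "x = Min {x\<in>a ` {1..n}. m < x}"
    have x: "x \<in> a ` {1..n}" "m < x"
      using Min_in[of "{x\<in>a ` {1..n}. m < x}"] True by (auto simp: x_def)
    have "a j \<le> m" if "j \<in> {1..n}" "a j < x" for j
    proof (rule ccontr)
      assume "\<not> a j \<le> m"
      then have "x \<le> a j" using Min_le[of "{x\<in>a ` {1..n}. m < x}" "a j"] that by (simp add: x_def)
      with that show False by simp
    qed
    then have "{j\<in>{1..n}. a j \<le> m} = {j\<in>{1..n}. a j < x}" using x(2) by auto
    moreover have "x \<le> card {j\<in>{1..n}. a j < x} + 1" using image_bound x(1) by blast
    ultimately show ?thesis using x(2) by simp
  qed
  then show "parking_function n a" using range by (simp add: parking_function_def)
qed

lemma parking_function_iff_rim:
  assumes "n > 0" and range: "\<forall>j\<in>{1..n}. a j \<in> {1..n}"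
  shows "parking_function n a \<longleftrightarrow> rim n a ! 0 = 0 \<and>
    (\<forall>i<length (rim n a). rim n a ! i \<le> sum_list (take i (map (\<lambda>A. int (card A)) (coim n a))))"
proof -
  define s where "s = sorted_list_of_set (a ` {1..n})"
  have "rim n a \<noteq> []"
    using \<open>n > 0\<close> by (auto simp: rim_def)
  then have "1 \<in> a ` {1..n} \<longleftrightarrow> rim n a ! 0 = 0"
    using atLeastAtMost_subset_image_iff_take_rim[OF range, of 1] by (cases "rim n a") auto
  moreover have "(\<forall>x\<in>a ` {1..n}. x \<le> card {j\<in>{1..n}. a j < x} + 1) \<longleftrightarrow>
      (\<forall>i<length s. s ! i \<le> card {j\<in>{1..n}. a j < s ! i} + 1)"
    unfolding s_def using all_set_conv_all_nth[of "sorted_list_of_set (a ` {1..n})"] by simp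
  moreover have "s ! i \<le> card {j\<in>{1..n}. a j < s ! i} + 1 \<longleftrightarrow>
      rim n a ! i \<le> sum_list (take i (map (\<lambda>A. int (card A)) (coim n a)))" if "i < length s" for i
    using that rim_nth[of i n a] sum_list_take_card_coim[of i n a]
    by (simp add: s_def length_rim length_coim) linarith
  moreover have "length (rim n a) = length s" by (simp add: s_def rim_def)
  ultimately show ?thesis using parking_function_iff_image[OF assms] by simp
qed

lemma run_eq_iff:
  assumes range: "\<forall>j\<in>{1..n}. a j \<in> {1..n}" and one: "1 \<in> a ` {1..n}"
  shows "run n a = r \<longleftrightarrow>
    take r (rim n a) = map int [0..<r] \<and> (r < length (rim n a) \<longrightarrow> int r < rim n a ! r)"
proof -
  let ?prefix = "\<lambda>i. take i (rim n a) = map int [0..<i]"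
  define M where "M = {i. 1 \<le> i \<and> ?prefix i}"
  have "length (rim n a) \<le> n"
    using card_mono[of "{1..n}" "a ` {1..n}"] range by (force simp: length_rim)
  then have runs: "{i\<in>{1..n}. {1..i} \<subseteq> a ` {1..n}} = M"
    using atLeastAtMost_subset_image_iff_take_rim[OF range] take_eq_upt_nth(1)
    by (fastforce simp: M_def)
  then have run: "run n a = Max M" and fin: "finite M"
    using one by (auto simp: run_def simp flip: runs)
  have "1 \<in> M"
    using one atLeastAtMost_subset_image_iff_take_rim[OF range, of 1] by (simp add: M_def)
  then have rim_0: "0 < length (rim n a)" "rim n a ! 0 = 0"
    using take_eq_upt_nth[of 1 "rim n a"] by (auto simp: M_def)
  have "Max M = r \<longleftrightarrow> r \<in> M \<and> \<not> ?prefix (Suc r)"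
  proof
    assume max: "Max M = r"
    then have "r \<in> M" using Max_in[OF fin] \<open>1 \<in> M\<close> by blast
    moreover have "Suc r \<notin> M" using Max_ge[OF fin, of "Suc r"] max by auto
    ultimately show "r \<in> M \<and> \<not> ?prefix (Suc r)" by (simp add: M_def)
  next
    assume r: "r \<in> M \<and> \<not> ?prefix (Suc r)"
    have "i \<le> r" if "i \<in> M" for i
    proof (rule ccontr)
      assume "\<not> i \<le> r"
      then have "?prefix (Suc r)"
        using take_eq_upt_mono[of i "rim n a" "Suc r"] that by (simp add: M_def)
      with r show False by simp
    qed
    then show "Max M = r" using Max_eqI[OF fin] r by blast
  qed
  also have "\<dots> \<longleftrightarrow> ?prefix r \<and> (r < length (rim n a) \<longrightarrow> int r < rim n a ! r)"
  proof (cases "r = 0")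
    case False
    have "int r \<le> rim n a ! r" if "?prefix r" "r < length (rim n a)"
      using take_eq_upt_nth(2)[OF that(1), of "r - 1"] False that(2)
        sorted_wrt_nth_less[OF sorted_rim, of "r - 1" r n a] by simp
    then show ?thesis using False take_Suc_eq_upt_iff[of r "rim n a"] by (auto simp: M_def)
  qed (use rim_0 in \<open>simp add: M_def\<close>)
  finally show ?thesis using run by simp
qed

theorem lemma4p8:
  fixes n :: nat and As :: "nat set list" and a :: "nat \<Rightarrow> nat"
  assumes "n > 0"
    and "ordered_partition n As"
    and "\<forall>j\<in>{1..n}. a j \<in> {1..n}"
    and "coim n a = As"
  shows "(parking_function n a \<longleftrightarrow> rim n a \<in> box (map (\<lambda>A. int (card A)) (butlast As))) \<and>
    (\<forall>r::nat. (parking_function n a \<and> run n a = r) \<longleftrightarrow>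
       (\<exists>xs::int list. rim n a = map int [0..<r] @ xs \<and>
          0 # map (\<lambda>x. x - int r) xs \<in>
            box (take (length As - r)
                   ((sum_list (take r (map (\<lambda>A. int (card A)) (butlast As))) - int r)
                    # drop r (map (\<lambda>A. int (card A)) (butlast As))))))"
proof -
  let ?ls = "map (\<lambda>A. int (card A)) (butlast As)"
  have len_As: "length As = length (rim n a)"
    unfolding assms(4)[symmetric] by (simp add: length_rim length_coim)
  moreover have "rim n a \<noteq> []" using assms(1) by (auto simp: rim_def)
  ultimately have len: "length (rim n a) = length ?ls + 1" by simp
  have "\<forall>A\<in>set As. A \<noteq> {} \<and> finite A"
    using assms(2) unfolding ordered_partition_def by (metis Union_upper finite_atLeastAtMost finite_subset)
  then have pos: "\<forall>l\<in>set ?ls. 1 \<le> l"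
    by (auto simp: Suc_le_eq card_gt_0_iff dest: in_set_butlastD)
  have "take i ?ls = take i (map (\<lambda>A. int (card A)) (coim n a))" if "i < length (rim n a)" for i
    using that len_As assms(4) by (simp add: take_map take_butlast)
  then have pf_box: "parking_function n a \<longleftrightarrow> rim n a \<in> box ?ls"
    unfolding box_iff parking_function_iff_rim[OF assms(1,3)] using sorted_rim len by auto
  show ?thesis
    unfolding len_As box_prefix_iff[OF sorted_rim len pos] pf_box[symmetric]
    using run_eq_iff[OF assms(3)] parking_function_iff_image[OF assms(1,3)] by blast
qed

end
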